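(* Let $\mathcal G$ be a connected rank-$D$ uncolored tensor graph and let $T$ be a tree of white lines of $\mathcal G$ spanning all its bubbles. Let $\mathcal G_1=\mathcal G/T$ be the rosette obtained by contracting the lines of $T$. Then: - for every jacket $J$ of $\mathcal G_{\rm color}$, the pinched jacket $\widetilde J$ and the corresponding pinched jacket $\widetilde J_1$ of $\mathcal G_1$ satisfy $g_{\widetilde J}=g_{\widetilde J_1}$; - for every boundary jacket $J_\partial$, $g_{J_\partial}=g_{(J_\partial)_1}$, where $(J_\partial)_1$ is the same jacket of the boundary graph of $\mathcal G_1$.
   Context: Fix $D\ge 3$. A (D+1)-colored graph $\mathcal G_{\rm color}$ is a bipartite graph in which every vertex has exactly one half-line of each color $0,1,\dots,D$. Lines of colors $1,\dots,D$ ("colored lines") join two vertices. Lines of color $0$ ("white lines") either join two vertices (internal white lines) or are external legs attached to a single vertex. A rank-$D$ uncolored tensor graph $\mathcal G$ is identified with such a $\mathcal G_{\rm color}$: its bubbles (vertices) are the connected components of the subgraph formed by the colored lines, and its lines are the white lines. Contracting an internal white line joining vertices $v,w$ of $\mathcal G_{\rm color}$ that lie in different bubbles means the following: - delete $v$, $w$ and the white line; - for each color $i=1,\dots,D$, replace the two $i$-lines incident to $v$ and $w$ by a single $i$-line joining their other endpoints. A tree of white lines is contracted by contracting its lines successively. The result $\mathcal G/T$ is a rosette: it has a single bubble (a connected $D$-colored graph), and all its remaining internal white lines, as well as its external legs, are attached to that bubble. A face of colors $\{i,j\}$ is a maximal connected subgraph whose lines alternate between colors $i$ and $j$. It is closed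 if it is a cycle, and open if it is a path ending on external legs (possible only when $0\in\{i,j\}$). A jacket $J$ is a cycle on $\{0,\dots,D\}$ up to orientation. For $J=(n0m\dots)$, the pinched jacket $\widetilde J$ is the closed ribbon graph with the $V$ vertices and $L$ internal lines (colored lines and internal white lines) of $\mathcal G_{\rm color}$. Its faces are the closed faces with color pair consecutive in $J$, together with the closed cycles obtained by concatenating open $0n$ and open $0m$ faces alternately at the external legs. For connected $\mathcal G$, its genus is defined by $2-2g_{\widetilde J}=V-L+F_{\widetilde J}$. The boundary graph $\partial\mathcal G$ is the $D$-colored graph whose vertices are the external legs and whose lines of color $i$ are the open $\{0,i\}$ faces, each joining the two external legs at its ends. A boundary jacket $J_\partial$ is a cycle on $\{1,\dots,D\}$ up to orientation. Its genus is defined by $2C_{\partial\mathcal G}-2g_{J_\partial}=V_{\partial\mathcal G}-L_{\partial\mathcal G}+F_{J_\partial}$, where $C_{\partial\mathcal G}$ is the number of connected components of $\partial\mathcal G$ and $F_{J_\partial}$ counts the faces with color pair consecutive in $J_\partial$. *)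

theory Defs
  imports Complex_Main
begin

text \<open>A (D+1)-colored graph: a vertex set V together with, for each color i in 0..D,
  the map sending a vertex to the other endpoint of its i-line.  For color 0 it is an involution of V whose fixed points
  are exactly the vertices carrying an external leg (a white line cannot join a vertex
  to itself in a bipartite graph).\<close>

type_synonym 'v cgraph = "'v set \<times> (nat \<Rightarrow> 'v \<Rightarrow> 'v)"

definition verts :: "'v cgraph \<Rightarrow> 'v set" where "verts G = fst G"
definition sig :: "'v cgraph \<Rightarrow> nat \<Rightarrow> 'v \<Rightarrow> 'v" where "sig G = snd G"

definition colored_graph :: "nat \<Rightarrow> 'v cgraph \<Rightarrow> bool" where
  "colored_graph D G \<longleftrightarrow>
     finite (verts G) \<and>
     (\<forall>i\<le>D. \<forall>x\<in>verts G. sig G i x \<in> verts G \<and> sig G i (sig G i x) = x) \<and>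
     (\<forall>i\<in>{1..D}. \<forall>x\<in>verts G. sig G i x \<noteq> x) \<and>
     (\<exists>b::'v \<Rightarrow> bool. \<forall>i\<le>D. \<forall>x\<in>verts G. sig G i x \<noteq> x \<longrightarrow> b (sig G i x) \<noteq> b x)"

definition col_rel :: "'v cgraph \<Rightarrow> nat set \<Rightarrow> ('v \<times> 'v) set" where
  "col_rel G C = {(x, sig G i x) | x i. x \<in> verts G \<and> i \<in> C}"

definition ncomp :: "'v set \<Rightarrow> ('v \<times> 'v) set \<Rightarrow> nat" where
  "ncomp A R = card (A // (R\<^sup>*))"

definition cg_connected :: "nat \<Rightarrow> 'v cgraph \<Rightarrow> bool" where
  "cg_connected D G \<longleftrightarrow> verts G \<noteq> {} \<and>
     (\<forall>x\<in>verts G. \<forall>y\<in>verts G. (x, y) \<in> (col_rel G {0..D})\<^sup>*)"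

definition legs :: "'v cgraph \<Rightarrow> 'v set" where
  "legs G = {x \<in> verts G. sig G 0 x = x}"

text \<open>Number of closed faces of a color pair P (a face is a connected component of the
  subgraph of lines with colors in P; it is open iff it contains an external leg).\<close>
definition closed_faces :: "'v cgraph \<Rightarrow> nat set \<Rightarrow> nat" where
  "closed_faces G P = card {c \<in> verts G // ((col_rel G P)\<^sup>*). 0 \<in> P \<longrightarrow> c \<inter> legs G = {}}"

text \<open>Boundary graph: the i-line at external leg x is the open {0,i} face through x,
  joining x to the other leg at the end of that face.\<close>
definition bsig :: "'v cgraph \<Rightarrow> nat \<Rightarrow> 'v \<Rightarrow> 'v" where
  "bsig G i x = (THE y. y \<in> legs G \<and> y \<noteq> x \<and> (x, y) \<in> (col_rel G {0, i})\<^sup>*)"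

definition bd_rel :: "'v cgraph \<Rightarrow> nat set \<Rightarrow> ('v \<times> 'v) set" where
  "bd_rel G C = {(x, bsig G i x) | x i. x \<in> legs G \<and> i \<in> C}"

text \<open>Jackets: cycles on the colors, given by a list (up to rotation/orientation, which do
  not affect the set of consecutive pairs).\<close>
definition jacket_pairs :: "nat list \<Rightarrow> nat set set" where
  "jacket_pairs js = {{js ! k, js ! (Suc k mod length js)} | k. k < length js}"

definition is_jacket :: "nat \<Rightarrow> nat list \<Rightarrow> bool" where
  "is_jacket D js \<longleftrightarrow> distinct js \<and> set js = {0..D}"

definition is_bjacket :: "nat \<Rightarrow> nat list \<Rightarrow> bool" where
  "is_bjacket D js \<longleftrightarrow> distinct js \<and> set js = {1..D}"

text \<open>Internal lines: D|V|/2 colored lines and (|V| - #legs)/2 internal white lines.\<close>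
definition n_int_lines :: "nat \<Rightarrow> 'v cgraph \<Rightarrow> real" where
  "n_int_lines D G = (real D * real (card (verts G)) + real (card (verts G)) - real (card (legs G))) / 2"

text \<open>Faces of the pinched jacket: closed faces with consecutive colors, plus the cycles
  formed by alternating open 0n and 0m faces (n, m the neighbours of 0 in J), i.e. the
  {n,m}-faces of the boundary graph.\<close>
definition pinched_faces :: "'v cgraph \<Rightarrow> nat list \<Rightarrow> nat" where
  "pinched_faces G js = (\<Sum>P\<in>jacket_pairs js. closed_faces G P)
     + ncomp (legs G) (bd_rel G {c. {0, c} \<in> jacket_pairs js})"

definition pinched_genus :: "nat \<Rightarrow> 'v cgraph \<Rightarrow> nat list \<Rightarrow> real" where
  "pinched_genus D G js =
     (2 - real (card (verts G)) + n_int_lines D G - real (pinched_faces G js)) / 2"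

definition boundary_genus :: "nat \<Rightarrow> 'v cgraph \<Rightarrow> nat list \<Rightarrow> real" where
  "boundary_genus D G js =
     (2 * real (ncomp (legs G) (bd_rel G {1..D})) - real (card (legs G))
      + real D * real (card (legs G)) / 2
      - real (\<Sum>P\<in>jacket_pairs js. ncomp (legs G) (bd_rel G P))) / 2"

definition int_white :: "'v cgraph \<Rightarrow> 'v \<times> 'v \<Rightarrow> bool" where
  "int_white G t \<longleftrightarrow> fst t \<in> verts G \<and> snd t = sig G 0 (fst t) \<and> snd t \<noteq> fst t"

text \<open>Connectivity of the graph whose nodes are bubbles and whose edges are the lines of T.\<close>
definition tree_conn :: "nat \<Rightarrow> 'v cgraph \<Rightarrow> ('v \<times> 'v) set \<Rightarrow> bool" where
  "tree_conn D G T \<longleftrightarrow> (\<forall>x\<in>verts G. \<forall>y\<in>verts G.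
     (x, y) \<in> (col_rel G {1..D} \<union> T \<union> T\<inverse>)\<^sup>*)"

text \<open>T is a tree of white lines spanning all bubbles: a minimally connected set of
  internal white lines on the bubble graph.\<close>
definition white_tree :: "nat \<Rightarrow> 'v cgraph \<Rightarrow> ('v \<times> 'v) list \<Rightarrow> bool" where
  "white_tree D G ts \<longleftrightarrow> (\<forall>t\<in>set ts. int_white G t) \<and>
     distinct (map (\<lambda>(v, w). {v, w}) ts) \<and>
     tree_conn D G (set ts) \<and> (\<forall>t\<in>set ts. \<not> tree_conn D G (set ts - {t}))"

definition contract :: "'v cgraph \<Rightarrow> 'v \<times> 'v \<Rightarrow> 'v cgraph" where
  "contract G t = (let v = fst t; w = snd t in
     (verts G - {v, w},
      \<lambda>i x. if i = 0 then sig G 0 x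
            else if x = sig G i v then sig G i w
            else if x = sig G i w then sig G i v
            else sig G i x))"

definition contract_tree :: "'v cgraph \<Rightarrow> ('v \<times> 'v) list \<Rightarrow> 'v cgraph" where
  "contract_tree G ts = foldl contract G ts"

end

theory Submission
  imports Defs
begin

text \<open>
  The lines of the tree are contracted one at a time.  Each of them joins two different
  bubbles when it is contracted, because the remaining lines still form a forest.  For one
  such line (v, w) the two graphs are compared directly: two vertices and D + 1 internal
  lines disappear; a face with colors {0, i} survives (with v and w cut out), so the open
  faces and hence the boundary graph do not change; the two faces with colors {k, k'}
  through v and through w are distinct and merge into one.  A pinched jacket has two color
  pairs containing 0 and D - 1 pairs without 0, so it loses exactly D - 1 faces and its Euler
  characteristic is unchanged.
\<close>

lemma quotient_as_image: "A // r = (\<lambda>x. r``{x}) ` A"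
  unfolding quotient_def by auto

lemma sym_rtrancl_class_eq:
  assumes "sym R" and "(x, y) \<in> R\<^sup>*"
  shows "R\<^sup>*``{x} = R\<^sup>*``{y}"
proof -
  have "(y, x) \<in> R\<^sup>*"
    using assms sym_rtrancl[OF assms(1)] by (meson symD)
  then show ?thesis
    using assms(2) by (auto intro: rtrancl_trans)
qed

lemma class_add_edge:
  assumes sR: "sym R"
  shows "(R \<union> {(a, b), (b, a)})\<^sup>*``{x} =
    (if x \<in> R\<^sup>*``{a} \<union> R\<^sup>*``{b} then R\<^sup>*``{a} \<union> R\<^sup>*``{b} else R\<^sup>*``{x})"
    (is "?L = ?T")
proof -
  let ?E = "R \<union> {(a, b), (b, a)}" and ?M = "R\<^sup>*``{a} \<union> R\<^sup>*``{b}"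
  have swap: "(p, q) \<in> R\<^sup>* \<Longrightarrow> (q, p) \<in> R\<^sup>*" for p q
    using sym_rtrancl[OF sR] by (meson symD)
  have R_E: "R\<^sup>* \<subseteq> ?E\<^sup>*"
    by (rule rtrancl_mono) blast
  have M_closed: "?M \<subseteq> ?E\<^sup>*``{y}" if "y \<in> ?M" for y
  proof -
    have "(y, a) \<in> ?E\<^sup>*"
      using that swap R_E by (auto intro: rtrancl_trans rtrancl.rtrancl_into_rtrancl)
    moreover have "(a, z) \<in> ?E\<^sup>*" if "z \<in> ?M" for z
      using that R_E by (auto intro: rtrancl_trans converse_rtrancl_into_rtrancl)
    ultimately show ?thesis
      by (auto intro: rtrancl_trans)
  qed
  have fwd: "(x, y) \<in> ?E\<^sup>* \<Longrightarrow> y \<in> ?T" for y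
  proof (induction rule: rtrancl_induct)
    case (step y z)
    then show ?case
      using swap by (auto split: if_splits intro: rtrancl.rtrancl_into_rtrancl)
  qed simp
  moreover have "?T \<subseteq> ?L"
    using M_closed R_E by auto
  ultimately show ?thesis
    by blast
qed

lemma card_quotient_add_edge:
  assumes sR: "sym R" and fin: "finite A" and ab: "a \<in> A" "b \<in> A"
    and apart: "(a, b) \<notin> R\<^sup>*"
  shows "card (A // (R \<union> {(a, b), (b, a)})\<^sup>*) = card (A // R\<^sup>*) - 1"
proof -
  let ?C = "\<lambda>x. R\<^sup>*``{x}"
  let ?M = "?C a \<union> ?C b"
  let ?Q = "A // R\<^sup>*"
  have in_M: "?C x = ?C a \<or> ?C x = ?C b" if "x \<in> ?M" for x
    using that sym_rtrancl_class_eq[OF sR, of a x] sym_rtrancl_class_eq[OF sR, of b x] by auto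
  have Ca_Cb: "?C a \<noteq> ?C b"
    using apart by auto
  have Q2: "{?C a, ?C b} \<subseteq> ?Q"
    using ab by (auto intro: quotientI)
  have finQ: "finite ?Q"
    using fin by (simp add: quotient_as_image)
  have M_new: "?M \<notin> ?Q - {?C a, ?C b}"
    using in_M by (auto simp: quotient_as_image)
  have "A // (R \<union> {(a, b), (b, a)})\<^sup>* = insert ?M (?Q - {?C a, ?C b})"
  proof -
    let ?CE = "\<lambda>x. (R \<union> {(a, b), (b, a)})\<^sup>*``{x}"
    have "?CE ` A = ?CE ` (A \<inter> ?M) \<union> ?CE ` (A - ?M)"
      by blast
    also have "\<dots> = (\<lambda>x. ?M) ` (A \<inter> ?M) \<union> ?C ` (A - ?M)"
      using class_add_edge[OF sR, of a b] by (intro arg_cong2[where f = "(\<union>)"] image_cong) auto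
    also have "\<dots> = insert ?M (?Q - {?C a, ?C b})"
    proof -
      have "A \<inter> ?M \<noteq> {}"
        using ab by auto
      moreover have "?C ` (A - ?M) = ?Q - {?C a, ?C b}"
        using in_M by (auto simp: quotient_as_image image_iff)
      ultimately show ?thesis
        by auto
    qed
    finally show ?thesis
      by (simp add: quotient_as_image)
  qed
  moreover have "card (?Q - {?C a, ?C b}) = card ?Q - 2"
    using Q2 Ca_Cb finQ by (simp add: card_Diff_subset)
  moreover have "card ?Q \<ge> 2"
    using card_mono[OF finQ Q2] Ca_Cb by simp
  ultimately show ?thesis
    using M_new finQ by simp
qed

lemma bij_betw_quotient_remove:
  assumes sE: "sym E"
    and classes: "\<And>x. x \<in> A - X \<Longrightarrow> R\<^sup>*``{x} = E\<^sup>*``{x} - X"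
    and reach: "\<And>x. x \<in> A \<Longrightarrow> \<exists>y\<in>A - X. (x, y) \<in> E\<^sup>*"
  shows "bij_betw (\<lambda>c. c - X) (A // E\<^sup>*) ((A - X) // R\<^sup>*)"
proof -
  have rep: "\<exists>y\<in>A - X. c = E\<^sup>*``{y}" if "c \<in> A // E\<^sup>*" for c
    using that reach sym_rtrancl_class_eq[OF sE] by (auto simp: quotient_as_image) metis
  have "inj_on (\<lambda>c. c - X) (A // E\<^sup>*)"
  proof (rule inj_onI)
    fix c1 c2
    assume "c1 \<in> A // E\<^sup>*" "c2 \<in> A // E\<^sup>*" and eq: "c1 - X = c2 - X"
    then obtain y1 y2 where y: "y1 \<in> A - X" "c1 = E\<^sup>*``{y1}" "y2 \<in> A - X" "c2 = E\<^sup>*``{y2}"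
      using rep by meson
    then have "(y2, y1) \<in> E\<^sup>*"
      using eq by blast
    then show "c1 = c2"
      using y sym_rtrancl_class_eq[OF sE] by metis
  qed
  moreover have "(\<lambda>c. c - X) ` (A // E\<^sup>*) = (A - X) // R\<^sup>*"
  proof
    show "(\<lambda>c. c - X) ` (A // E\<^sup>*) \<subseteq> (A - X) // R\<^sup>*"
    proof
      fix c'
      assume "c' \<in> (\<lambda>c. c - X) ` (A // E\<^sup>*)"
      then obtain y where "y \<in> A - X" "c' = E\<^sup>*``{y} - X"
        using rep by blast
      then show "c' \<in> (A - X) // R\<^sup>*"
        using classes by (metis quotientI)
    qed
    show "(A - X) // R\<^sup>* \<subseteq> (\<lambda>c. c - X) ` (A // E\<^sup>*)"
      using classes by (auto simp: quotient_as_image)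
  qed
  ultimately show ?thesis
    unfolding bij_betw_def by blast
qed

text \<open>Two involutions \<sigma>, \<rho> which change a 2-coloring b generate a cycle through v;
  with v removed it is a path from \<sigma> v to \<rho> v alternating between \<sigma>- and \<rho>-steps.\<close>
lemma alternating_path:
  fixes \<sigma> \<rho> :: "'a \<Rightarrow> 'a" and b :: "'a \<Rightarrow> bool"
  assumes fin: "finite V" and v: "v \<in> V"
    and \<sigma>: "\<And>x. x \<in> V \<Longrightarrow> \<sigma> x \<in> V \<and> \<sigma> (\<sigma> x) = x \<and> b (\<sigma> x) \<noteq> b x"
    and \<rho>: "\<And>x. x \<in> V \<Longrightarrow> \<rho> x \<in> V \<and> \<rho> (\<rho> x) = x \<and> b (\<rho> x) \<noteq> b x"
  shows "(\<sigma> v, \<rho> v) \<in> {(x, y). x \<in> V - {v} \<and> y \<in> V - {v} \<and> (y = \<sigma> x \<or> y = \<rho> x)}\<^sup>*"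
    (is "_ \<in> ?S\<^sup>*")
proof -
  define \<tau> where "\<tau> x = (if x \<in> V then \<rho> (\<sigma> x) else x)" for x
  have \<tau>_V: "x \<in> V \<Longrightarrow> \<tau> x \<in> V" for x
    using \<sigma> \<rho> by (simp add: \<tau>_def)
  have inj: "inj \<tau>"
  proof (rule injI)
    fix x y
    assume "\<tau> x = \<tau> y"
    then show "x = y"
      using \<sigma> \<rho> \<tau>_V unfolding \<tau>_def by (smt (verit))
  qed
  have orbit_V: "(\<tau> ^^ n) v \<in> V" for n
    by (induction n) (simp_all add: v \<tau>_V)
  have "finite {y. \<exists>n. y = (\<tau> ^^ n) v}"
    using orbit_V by (intro finite_subset[OF _ fin]) blast
  then have "\<exists>n. 0 < n \<and> (\<tau> ^^ n) v = v"
    using funpow_inj_finite[OF inj] by blast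
  define m where "m = (LEAST n. 0 < n \<and> (\<tau> ^^ n) v = v)"
  then have m: "0 < m" "(\<tau> ^^ m) v = v"
    using LeastI_ex[OF \<open>\<exists>n. 0 < n \<and> (\<tau> ^^ n) v = v\<close>] by auto
  have m_min: "(\<tau> ^^ j) v \<noteq> v" if "0 < j" "j < m" for j
    using not_less_Least[of j "\<lambda>n. 0 < n \<and> (\<tau> ^^ n) v = v"] that m_def by auto
  have \<tau>_Suc: "(\<tau> ^^ Suc j) v = \<rho> (\<sigma> ((\<tau> ^^ j) v))" for j
    using orbit_V[of j] by (simp add: \<tau>_def)
  text \<open>The orbit of v under \<tau> has the color of v, so its \<sigma>-images avoid v.\<close>
  have parity: "b ((\<tau> ^^ j) v) = b v" for j
  proof (induction j)
    case (Suc j)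
    have "\<sigma> ((\<tau> ^^ j) v) \<in> V"
      using \<sigma>[OF orbit_V[of j]] by blast
    then show ?case
      using Suc \<sigma>[OF orbit_V[of j]] \<rho>[of "\<sigma> ((\<tau> ^^ j) v)"] \<tau>_Suc[of j] by auto
  qed simp
  have \<sigma>_orbit: "\<sigma> ((\<tau> ^^ j) v) \<in> V - {v}" for j
    using \<sigma>[OF orbit_V[of j]] parity[of j] by auto
  have walk: "(\<sigma> v, \<sigma> ((\<tau> ^^ j) v)) \<in> ?S\<^sup>*" if "j < m" for j
    using that
  proof (induction j)
    case (Suc j)
    let ?y = "\<sigma> ((\<tau> ^^ j) v)" and ?u = "(\<tau> ^^ Suc j) v"
    have "?u \<in> V - {v}"
      using orbit_V[of "Suc j"] m_min[of "Suc j"] Suc.prems by blast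
    then have "(?y, ?u) \<in> ?S" "(?u, \<sigma> ?u) \<in> ?S"
      using \<sigma>_orbit[of j] \<sigma>_orbit[of "Suc j"] \<tau>_Suc[of j] by auto
    then show ?case
      using Suc by (meson Suc_lessD rtrancl.rtrancl_into_rtrancl)
  qed simp
  obtain j where j: "m = Suc j"
    using m(1) gr0_implies_Suc by blast
  have "\<rho> (\<sigma> ((\<tau> ^^ j) v)) = v"
    using \<tau>_Suc[of j] m(2) j by simp
  then have "\<sigma> ((\<tau> ^^ j) v) = \<rho> v"
    using \<rho> \<sigma>_orbit[of j] by force
  then show ?thesis
    using walk[of j] j by simp
qed

lemma Suc_mod_eq: "k < n \<Longrightarrow> Suc k mod n = (if Suc k = n then 0 else Suc k)"
  by (simp add: mod_Suc)

definition cycle_pair :: "nat list \<Rightarrow> nat \<Rightarrow> nat set" where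
  "cycle_pair js k = {js ! k, js ! (Suc k mod length js)}"

lemma jacket_pairs_image: "jacket_pairs js = cycle_pair js ` {..<length js}"
  unfolding jacket_pairs_def cycle_pair_def by auto

lemma jacket_pair_elem:
  assumes d: "distinct js" and n: "length js \<ge> 2" and P: "P \<in> jacket_pairs js"
  shows "\<exists>a b. P = {a, b} \<and> a \<noteq> b \<and> a \<in> set js \<and> b \<in> set js"
proof -
  let ?n = "length js"
  obtain k where k: "k < ?n" "P = {js ! k, js ! (Suc k mod ?n)}"
    using P unfolding jacket_pairs_def by auto
  have next_k: "Suc k mod ?n < ?n"
    using n by (intro mod_less_divisor) linarith
  moreover have "Suc k mod ?n \<noteq> k"
    using n Suc_mod_eq[OF k(1)] by simp
  ultimately have "js ! k \<noteq> js ! (Suc k mod ?n)"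
    using nth_eq_iff_index_eq[OF d k(1) next_k] by simp
  then show ?thesis
    using k next_k by (intro exI[of _ "js ! k"] exI[of _ "js ! (Suc k mod ?n)"]) auto
qed

text \<open>A cycle of length at least 3 has as many edges as vertices.\<close>
lemma cycle_pair_inj:
  assumes d: "distinct js" and n3: "length js \<ge> 3"
  shows "inj_on (cycle_pair js) {..<length js}"
proof (rule inj_onI)
  let ?n = "length js"
  fix k l
  assume "k \<in> {..<?n}" "l \<in> {..<?n}" and e: "cycle_pair js k = cycle_pair js l"
  then have kl: "k < ?n" "l < ?n"
    by auto
  have nxt: "Suc k mod ?n < ?n" "Suc l mod ?n < ?n"
    using n3 by (intro mod_less_divisor; linarith)+
  have idx: "js ! i = js ! j \<longleftrightarrow> i = j" if "i < ?n" "j < ?n" for i j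
    using nth_eq_iff_index_eq[OF d that] .
  from e have "(js ! k = js ! l \<and> js ! (Suc k mod ?n) = js ! (Suc l mod ?n)) \<or>
      (js ! k = js ! (Suc l mod ?n) \<and> js ! (Suc k mod ?n) = js ! l)"
    unfolding cycle_pair_def by (auto simp: doubleton_eq_iff)
  then have "k = l \<or> (k = Suc l mod ?n \<and> Suc k mod ?n = l)"
    using idx kl nxt by auto
  then show "k = l"
    using Suc_mod_eq[OF kl(1)] Suc_mod_eq[OF kl(2)] n3 by (auto split: if_splits)
qed

lemma card_jacket_pairs_avoiding:
  assumes d: "distinct js" and n3: "length js \<ge> 3" and c: "c \<in> set js"
  shows "card {P \<in> jacket_pairs js. c \<notin> P} = length js - 2"
proof -
  let ?n = "length js"
  obtain p where p: "p < ?n" "js ! p = c"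
    using c by (metis in_set_conv_nth)
  define q where "q = (if p = 0 then ?n - 1 else p - 1)"
  have at_c: "js ! k = c \<longleftrightarrow> k = p" if "k < ?n" for k
    using nth_eq_iff_index_eq[OF d that p(1)] p(2) by auto
  text \<open>The two pairs containing c are the ones starting at p and just before p.\<close>
  have "c \<in> cycle_pair js k \<longleftrightarrow> k = p \<or> k = q" if k: "k < ?n" for k
  proof -
    have "Suc k mod ?n < ?n"
      using n3 by (intro mod_less_divisor) linarith
    then have "c \<in> cycle_pair js k \<longleftrightarrow> k = p \<or> Suc k mod ?n = p"
      unfolding cycle_pair_def using at_c[OF k] at_c[of "Suc k mod ?n"] by auto
    also have "\<dots> \<longleftrightarrow> k = p \<or> k = q"
      using Suc_mod_eq[OF k] k p(1) unfolding q_def by (cases "p = 0") auto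
    finally show ?thesis .
  qed
  then have "{k \<in> {..<?n}. c \<notin> cycle_pair js k} = {..<?n} - {p, q}"
    by auto
  moreover have "card ({..<?n} - {p, q}) = ?n - 2"
    using p(1) n3 unfolding q_def by (subst card_Diff_subset) auto
  moreover have "{P \<in> jacket_pairs js. c \<notin> P} = cycle_pair js ` {k \<in> {..<?n}. c \<notin> cycle_pair js k}"
    unfolding jacket_pairs_image by auto
  moreover have "inj_on (cycle_pair js) {k \<in> {..<?n}. c \<notin> cycle_pair js k}"
    using cycle_pair_inj[OF d n3] by (rule inj_on_subset) auto
  ultimately show ?thesis
    by (simp add: card_image)
qed

lemma col_relI: "x \<in> verts G \<Longrightarrow> i \<in> P \<Longrightarrow> (x, sig G i x) \<in> col_rel G P"
  unfolding col_rel_def by auto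

lemma col_rel_mono: "P \<subseteq> Q \<Longrightarrow> col_rel G P \<subseteq> col_rel G Q"
  unfolding col_rel_def by auto

lemma sym_col_rel:
  assumes "colored_graph D G" and "P \<subseteq> {0..D}"
  shows "sym (col_rel G P)"
proof (rule symI)
  fix x y
  assume "(x, y) \<in> col_rel G P"
  then obtain i where "i \<in> P" "x \<in> verts G" "y = sig G i x"
    unfolding col_rel_def by blast
  moreover have "sig G i x \<in> verts G \<and> sig G i (sig G i x) = x"
    using assms calculation unfolding colored_graph_def by auto
  ultimately show "(y, x) \<in> col_rel G P"
    using col_relI by metis
qed

lemma col_rel_rtrancl_verts:
  assumes "colored_graph D G" and "P \<subseteq> {0..D}"
    and "(x, y) \<in> (col_rel G P)\<^sup>*" and "x \<in> verts G"
  shows "y \<in> verts G"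
  using assms(3,4)
proof induction
  case (step y z)
  then show ?case
    using assms(1,2) unfolding colored_graph_def col_rel_def by auto
qed

definition bubble_rel :: "nat \<Rightarrow> 'v cgraph \<Rightarrow> ('v \<times> 'v) set \<Rightarrow> ('v \<times> 'v) set" where
  "bubble_rel D G T = col_rel G {1..D} \<union> T \<union> T\<inverse>"

locale line_contraction =
  fixes D :: nat and G :: "'v cgraph" and v w :: 'v
  assumes colored: "colored_graph D G" and v_V: "v \<in> verts G" and w_def: "w = sig G 0 v"
    and v_ne_w: "v \<noteq> w" and separate_bubbles: "(v, w) \<notin> (col_rel G {1..D})\<^sup>*"
begin

abbreviation "s \<equiv> sig G"
abbreviation "V \<equiv> verts G"
abbreviation "R P \<equiv> col_rel G P"

definition G' :: "'v cgraph" where "G' = contract G (v, w)"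

abbreviation "s' \<equiv> sig G'"
abbreviation "V' \<equiv> verts G'"
abbreviation "R' P \<equiv> col_rel G' P"

lemma verts_contract: "V' = V - {v, w}"
  unfolding G'_def contract_def verts_def by (simp add: Let_def)

lemma sig_contract_0: "s' 0 = s 0"
  unfolding G'_def contract_def sig_def by (simp add: Let_def)

lemma sig_contract:
  "i \<noteq> 0 \<Longrightarrow> s' i x = (if x = s i v then s i w else if x = s i w then s i v else s i x)"
  unfolding G'_def contract_def sig_def by (simp add: Let_def)

lemma finite_V: "finite V"
  using colored unfolding colored_graph_def by auto

lemma involution: "i \<le> D \<Longrightarrow> x \<in> V \<Longrightarrow> s i x \<in> V \<and> s i (s i x) = x"
  using colored unfolding colored_graph_def by auto

lemma no_loop: "i \<in> {1..D} \<Longrightarrow> x \<in> V \<Longrightarrow> s i x \<noteq> x"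
  using colored unfolding colored_graph_def by auto

lemma w_V: "w \<in> V" and s0_v: "s 0 v = w" and s0_w: "s 0 w = v"
  using involution[of 0 v] v_V w_def by auto

text \<open>The endpoints of the white line lie on different bubbles, so their colored neighbours
  are distinct from v and w.\<close>
lemma neighbours:
  assumes "i \<in> {1..D}"
  shows "s i v \<noteq> w" and "s i w \<noteq> v" and "s i v \<in> V'" and "s i w \<in> V'"
proof -
  show vw: "s i v \<noteq> w"
    using separate_bubbles col_relI[OF v_V assms] by auto
  show wv: "s i w \<noteq> v"
    using vw involution[of i w] w_V assms by force
  show "s i v \<in> V'" "s i w \<in> V'"
    using vw wv involution[of i] no_loop[OF assms] v_V w_V assms by (auto simp: verts_contract)
qed

lemma neighbours_distinct: "i \<le> D \<Longrightarrow> s i v \<noteq> s i w"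
  using involution[OF _ v_V] involution[OF _ w_V] v_ne_w by metis

lemma sig_contract_cases:
  assumes i: "i \<in> {1..D}" and x: "x \<in> V'"
  obtains "x = s i v" "s' i x = s i w"
    | "x = s i w" "s' i x = s i v"
    | "x \<noteq> s i v" "x \<noteq> s i w" "s' i x = s i x" "s i x \<in> V'"
proof -
  have iD: "i \<le> D" "i \<noteq> 0"
    using i by auto
  have "s i x \<in> V'" if "x \<noteq> s i v" "x \<noteq> s i w"
  proof -
    have "s i x \<in> V" "s i (s i x) = x"
      using x involution[OF iD(1)] by (auto simp: verts_contract)
    then show ?thesis
      using that by (auto simp: verts_contract)
  qed
  then show ?thesis
    using that sig_contract[OF iD(2)] neighbours_distinct[OF iD(1)]
    by (cases "x = s i v"; cases "x = s i w") auto
qed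

lemma sig_contract_involution:
  assumes i: "i \<le> D" and x: "x \<in> V'"
  shows "s' i x \<in> V' \<and> s' i (s' i x) = x"
proof -
  have xV: "x \<in> V" "x \<noteq> v" "x \<noteq> w"
    using x by (auto simp: verts_contract)
  have inv: "s i x \<in> V" "s i (s i x) = x"
    using involution[OF i xV(1)] by auto
  show ?thesis
  proof (cases "i = 0")
    case True
    have "s 0 x \<noteq> v" "s 0 x \<noteq> w"
      using inv xV s0_v s0_w True by metis+
    then show ?thesis
      using True inv by (simp add: sig_contract_0 verts_contract)
  next
    case False
    then have i1: "i \<in> {1..D}"
      using i by simp
    have s'_swap: "s' i (s i v) = s i w" "s' i (s i w) = s i v"
      using sig_contract[OF False] neighbours_distinct[OF i] by simp_all
    show ?thesis
    proof (cases rule: sig_contract_cases[OF i1 x])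
      case 3
      have "s i x \<noteq> s i v" "s i x \<noteq> s i w"
        using inv(2) involution[OF i v_V] involution[OF i w_V] xV by metis+
      then show ?thesis
        using 3 inv sig_contract[OF False] by simp
    qed (use s'_swap neighbours[OF i1] in simp_all)
  qed
qed

lemma colored_contract: "colored_graph D G'"
proof -
  obtain b :: "'v \<Rightarrow> bool" where b: "\<forall>i\<le>D. \<forall>x\<in>V. s i x \<noteq> x \<longrightarrow> b (s i x) \<noteq> b x"
    using colored unfolding colored_graph_def by auto
  have b_colored: "b (s i x) \<noteq> b x" if "i \<in> {1..D}" "x \<in> V" for i x
    using b no_loop that by auto
  have b_vw: "b w \<noteq> b v"
    using b[rule_format, of 0 v] v_V v_ne_w s0_v by simp
  have loop_free: "s' i x \<noteq> x" if i: "i \<in> {1..D}" and x: "x \<in> V'" for i x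
  proof -
    have "s i v \<noteq> s i w" "x \<in> V"
      using neighbours_distinct i x by (auto simp: verts_contract)
    then show ?thesis
      using no_loop[OF i] by (cases rule: sig_contract_cases[OF i x]) simp_all
  qed
  have bipartite: "b (s' i x) \<noteq> b x" if i: "i \<le> D" "s' i x \<noteq> x" and x: "x \<in> V'" for i x
  proof (cases "i = 0")
    case True
    then show ?thesis
      using b[rule_format, of 0 x] i x by (simp add: sig_contract_0 verts_contract)
  next
    case False
    then have i1: "i \<in> {1..D}"
      using i by simp
    have "x \<in> V"
      using x by (simp add: verts_contract)
    then show ?thesis
      using b_colored[OF i1] b_vw v_V w_V
      by (cases rule: sig_contract_cases[OF i1 x]) auto
  qed
  have "finite V'"
    using finite_V by (simp add: verts_contract)
  moreover have "\<forall>i\<le>D. \<forall>x\<in>V'. s' i x \<in> V' \<and> s' i (s' i x) = x"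
    using sig_contract_involution by blast
  moreover have "\<forall>i\<in>{1..D}. \<forall>x\<in>V'. s' i x \<noteq> x"
    using loop_free by blast
  moreover have "\<forall>i\<le>D. \<forall>x\<in>V'. s' i x \<noteq> x \<longrightarrow> b (s' i x) \<noteq> b x"
    using bipartite by blast
  ultimately show ?thesis
    unfolding colored_graph_def by blast
qed

lemma R_verts: "(x, y) \<in> R P \<Longrightarrow> P \<subseteq> {0..D} \<Longrightarrow> x \<in> V \<and> y \<in> V"
  using involution unfolding col_rel_def by auto

definition E :: "nat set \<Rightarrow> ('v \<times> 'v) set" where
  "E P = R P \<union> {(v, w), (w, v)}"

lemma sym_E: "P \<subseteq> {0..D} \<Longrightarrow> sym (E P)"
  using sym_col_rel[OF colored] unfolding E_def sym_def by blast

lemma R_contract_in_E: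
  assumes P: "P \<subseteq> {0..D}" and xy: "(x, y) \<in> R' P"
  shows "(x, y) \<in> (E P)\<^sup>*"
proof -
  obtain j where j: "j \<in> P" "x \<in> V'" "y = s' j x"
    using xy unfolding col_rel_def by auto
  have xV: "x \<in> V"
    using j(2) by (simp add: verts_contract)
  have R_E: "(a, s j a) \<in> (E P)\<^sup>*" if "a \<in> V" for a
    using col_relI[OF that j(1)] unfolding E_def by blast
  have vw: "(v, w) \<in> (E P)\<^sup>*" "(w, v) \<in> (E P)\<^sup>*"
    unfolding E_def by blast+
  show ?thesis
  proof (cases "j = 0")
    case True
    then show ?thesis
      using R_E[OF xV] j by (simp add: sig_contract_0)
  next
    case False
    then have j1: "j \<in> {1..D}" and jD: "j \<le> D"
      using j(1) P by auto
    have twice: "s j (s j v) = v" "s j (s j w) = w"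
      using involution[OF jD v_V] involution[OF jD w_V] by auto
    show ?thesis
    proof (cases rule: sig_contract_cases[OF j1 j(2)])
      case 1
      then show ?thesis
        using R_E[OF xV] vw(1) R_E[OF w_V] twice j(3) by (metis rtrancl_trans)
    next
      case 2
      then show ?thesis
        using R_E[OF xV] vw(2) R_E[OF v_V] twice j(3) by (metis rtrancl_trans)
    next
      case 3
      then show ?thesis
        using R_E[OF xV] j(3) by simp
    qed
  qed
qed

lemma R_kept:
  assumes P: "P \<subseteq> {0..D}" and xy: "(x, y) \<in> R P" and x: "x \<in> V'" and y: "y \<in> V'"
  shows "(x, y) \<in> R' P"
proof -
  obtain j where j: "j \<in> P" "y = s j x"
    using xy unfolding col_rel_def by auto
  have "s' j x = s j x"
  proof (cases "j = 0")
    case False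
    then have j1: "j \<in> {1..D}" and jD: "j \<le> D"
      using j(1) P by auto
    have "s j (s j v) = v" "s j (s j w) = w"
      using involution[OF jD v_V] involution[OF jD w_V] by auto
    then show ?thesis
      using j y by (cases rule: sig_contract_cases[OF j1 x]) (auto simp: verts_contract)
  qed (simp add: sig_contract_0)
  then show ?thesis
    using col_relI[OF x j(1)] j(2) by simp
qed

lemma R_contract_across:
  assumes "j \<in> P" and j1: "j \<in> {1..D}"
  shows "(s j v, s j w) \<in> R' P" and "(s j w, s j v) \<in> R' P"
proof -
  have "s' j (s j v) = s j w" "s' j (s j w) = s j v"
    using j1 sig_contract neighbours_distinct by auto
  then show "(s j v, s j w) \<in> R' P" "(s j w, s j v) \<in> R' P"
    using col_relI[OF neighbours(3)[OF j1] assms(1)] col_relI[OF neighbours(4)[OF j1] assms(1)]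
    by simp_all
qed

text \<open>The ports of a color set P are the other ends of the P-colored lines at v and w.
  Contraction does not split a face as long as all ports are joined in G'.\<close>
definition ports :: "nat set \<Rightarrow> 'v set" where
  "ports P = (\<lambda>j. s j v) ` (P - {0}) \<union> (\<lambda>j. s j w) ` (P - {0})"

definition joined :: "nat set \<Rightarrow> bool" where
  "joined P \<longleftrightarrow> (\<forall>p\<in>ports P. \<forall>q\<in>ports P. (p, q) \<in> (R' P)\<^sup>*)"

lemma leave_vw_at_port:
  assumes P: "P \<subseteq> {0..D}" and yz: "(y, z) \<in> E P" and y: "y \<in> {v, w}" and z: "z \<notin> {v, w}"
  shows "z \<in> ports P"
proof -
  obtain j where j: "j \<in> P" "z = s j y"
    using yz z unfolding E_def col_rel_def by auto
  have "j \<noteq> 0"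
  proof
    assume "j = 0"
    then have "z \<in> {v, w}"
      using j(2) y s0_v s0_w by auto
    then show False
      using z by simp
  qed
  then show ?thesis
    using j y unfolding ports_def by auto
qed

lemma class_contract:
  assumes P: "P \<subseteq> {0..D}" and J: "joined P" and x: "x \<in> V'"
  shows "(R' P)\<^sup>*``{x} = (E P)\<^sup>*``{x} - {v, w}"
proof
  have "(R' P)\<^sup>* \<subseteq> (E P)\<^sup>*"
    using R_contract_in_E[OF P] by (intro rtrancl_subset_rtrancl) auto
  moreover have "(R' P)\<^sup>*``{x} \<subseteq> V'"
    using col_rel_rtrancl_verts[OF colored_contract P _ x] by blast
  ultimately show "(R' P)\<^sup>*``{x} \<subseteq> (E P)\<^sup>*``{x} - {v, w}"
    by (auto simp: verts_contract)
next
  have "(y \<notin> {v, w} \<longrightarrow> (x, y) \<in> (R' P)\<^sup>*) \<and> (y \<in> {v, w} \<longrightarrow> ports P \<subseteq> (R' P)\<^sup>*``{x})"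
    if "(x, y) \<in> (E P)\<^sup>*" for y
    using that
  proof (induction rule: rtrancl_induct)
    case base
    then show ?case
      using x by (simp add: verts_contract)
  next
    case (step y z)
    have zy: "(z, y) \<in> E P"
      using step.hyps(2) sym_E[OF P] by (meson symD)
    consider "y \<in> {v, w}" "z \<in> {v, w}" | "y \<in> {v, w}" "z \<notin> {v, w}"
      | "y \<notin> {v, w}" "z \<in> {v, w}" | "y \<notin> {v, w}" "z \<notin> {v, w}"
      by blast
    then show ?case
    proof cases
      case 2
      then show ?thesis
        using step.IH leave_vw_at_port[OF P step.hyps(2)] by auto
    next
      case 3
      then have "y \<in> ports P"
        using leave_vw_at_port[OF P zy] by simp
      then show ?thesis
        using 3 step.IH J unfolding joined_def by (auto intro: rtrancl_trans)
    next
      case 4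
      then have "(y, z) \<in> R P"
        using step.hyps(2) unfolding E_def by auto
      then have "(y, z) \<in> R' P"
        using R_kept[OF P] R_verts[OF _ P] 4 by (simp add: verts_contract)
      then show ?thesis
        using 4 step.IH by (auto intro: rtrancl.rtrancl_into_rtrancl)
    qed (use step.IH in simp)
  qed
  then show "(E P)\<^sup>*``{x} - {v, w} \<subseteq> (R' P)\<^sup>*``{x}"
    by blast
qed

text \<open>For colors {0, i} the only ports s i v, s i w are joined by the new i-line.\<close>
lemma joined_white:
  assumes i: "i \<le> D"
  shows "joined {0, i}"
proof (cases "i = 0")
  case True
  then show ?thesis
    unfolding joined_def ports_def by simp
next
  case False
  then have i1: "i \<in> {1..D}" and "ports {0, i} = {s i v, s i w}"
    using i unfolding ports_def by auto
  then show ?thesis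
    unfolding joined_def using R_contract_across[OF _ i1, of "{0, i}"] by auto
qed

text \<open>The {k,k'}-face of G through v is a cycle which, with v removed, is a path of G' from
  s k v to s k' v; it avoids w because v and w lie on different bubbles.\<close>
lemma face_path_around_v:
  assumes k: "k \<in> {1..D}" and k': "k' \<in> {1..D}"
  shows "(s k v, s k' v) \<in> (R' {k, k'})\<^sup>*"
proof -
  let ?P = "{k, k'}"
  have P: "?P \<subseteq> {0..D}" and P1: "?P \<subseteq> {1..D}"
    using k k' by auto
  obtain b :: "'v \<Rightarrow> bool" where b: "\<forall>i\<le>D. \<forall>x\<in>V. s i x \<noteq> x \<longrightarrow> b (s i x) \<noteq> b x"
    using colored unfolding colored_graph_def by auto
  have colored_step: "s i x \<in> V \<and> s i (s i x) = x \<and> b (s i x) \<noteq> b x"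
    if "i \<in> {1..D}" "x \<in> V" for i x
    using involution[of i x] no_loop[OF that] b that by auto
  let ?S = "{(x, y). x \<in> V - {v} \<and> y \<in> V - {v} \<and> (y = s k x \<or> y = s k' x)}"
  have path: "(s k v, s k' v) \<in> ?S\<^sup>*"
    using alternating_path[OF finite_V v_V, of "s k" b "s k'"] colored_step k k' by blast
  have not_w: "y \<noteq> w" if "(v, y) \<in> (R ?P)\<^sup>*" for y
    using that separate_bubbles rtrancl_mono[OF col_rel_mono[OF P1, of G]] by blast
  have "(v, y) \<in> (R ?P)\<^sup>* \<and> (s k v, y) \<in> (R' ?P)\<^sup>*" if "(s k v, y) \<in> ?S\<^sup>*" for y
    using that
  proof (induction rule: rtrancl_induct)
    case base
    then show ?case
      using col_relI[OF v_V, of k ?P] by auto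
  next
    case (step y z)
    then have yz: "(y, z) \<in> R ?P" and "y \<in> V - {v}" "z \<in> V - {v}"
      using col_relI[of y G k ?P] col_relI[of y G k' ?P] by auto
    moreover have "(v, z) \<in> (R ?P)\<^sup>*"
      using step.IH yz by (meson rtrancl.rtrancl_into_rtrancl)
    moreover have "y \<noteq> w"
      using step.IH not_w by blast
    ultimately show ?case
      using step.IH R_kept[OF P yz] not_w by (auto simp: verts_contract intro: rtrancl.rtrancl_into_rtrancl)
  qed
  then show ?thesis
    using path by blast
qed

text \<open>For colors {k, k'} all four ports are joined: around v by the face path and to the
  w-side by the new lines.\<close>
lemma joined_colored:
  assumes k: "k \<in> {1..D}" and k': "k' \<in> {1..D}"
  shows "joined {k, k'}"
proof -
  let ?P = "{k, k'}"
  have sym': "sym ((R' ?P)\<^sup>*)"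
    using sym_rtrancl[OF sym_col_rel[OF colored_contract]] k k' by auto
  have "ports ?P = {s k v, s k' v, s k w, s k' w}"
    using k k' unfolding ports_def by auto
  moreover have "(s k v, p) \<in> (R' ?P)\<^sup>*" if "p \<in> {s k v, s k' v, s k w, s k' w}" for p
  proof -
    have "(s k v, s k' v) \<in> (R' ?P)\<^sup>*"
      using face_path_around_v[OF k k'] .
    moreover have "(s k v, s k w) \<in> R' ?P" "(s k' v, s k' w) \<in> R' ?P"
      using R_contract_across(1)[OF _ k, of ?P] R_contract_across(1)[OF _ k', of ?P] by auto
    ultimately show ?thesis
      using that by (auto intro: rtrancl.rtrancl_into_rtrancl)
  qed
  ultimately show ?thesis
    unfolding joined_def using sym' by (metis rtrancl_trans symD)
qed

lemma legs_not_vw: "v \<notin> legs G" "w \<notin> legs G"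
  unfolding legs_def using s0_v s0_w v_ne_w by auto

lemma legs_contract: "legs G' = legs G"
  unfolding legs_def using legs_not_vw by (auto simp: sig_contract_0 verts_contract legs_def)

lemma card_contract: "card V = card V' + 2"
proof -
  have "card V' = card V - 2"
    using finite_V v_V w_V v_ne_w by (simp add: verts_contract card_Diff_subset)
  moreover have "card {v, w} \<le> card V"
    using finite_V v_V w_V by (intro card_mono) auto
  ultimately show ?thesis
    using v_ne_w by simp
qed

lemma E_white: "0 \<in> P \<Longrightarrow> E P = R P"
  using col_relI[OF v_V, of 0 P] col_relI[OF w_V, of 0 P] s0_v s0_w unfolding E_def by auto

lemma closed_faces_contract:
  assumes P: "P \<subseteq> {0..D}" and J: "joined P" and j: "j \<in> P" "j \<in> {1..D}"
  shows "closed_faces G' P = card {c \<in> V // (E P)\<^sup>*. 0 \<in> P \<longrightarrow> c \<inter> legs G = {}}"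
proof -
  let ?g = "\<lambda>c. c - {v, w}" and ?Q = "\<lambda>c. 0 \<in> P \<longrightarrow> c \<inter> legs G = {}"
  have V': "V - {v, w} = V'"
    by (simp add: verts_contract)
  have reach: "\<exists>y\<in>V - {v, w}. (x, y) \<in> (E P)\<^sup>*" if "x \<in> V" for x
  proof (cases "x \<in> {v, w}")
    case True
    have "(v, s j v) \<in> (E P)\<^sup>*" "(w, v) \<in> (E P)\<^sup>*"
      using col_relI[OF v_V j(1)] unfolding E_def by blast+
    then show ?thesis
      using True neighbours(3)[OF j(2)] V' by (auto intro: rtrancl_trans)
  qed (use that in blast)
  have "bij_betw ?g (V // (E P)\<^sup>*) (V' // (R' P)\<^sup>*)"
    using bij_betw_quotient_remove[OF sym_E[OF P] _ reach] class_contract[OF P J] V' by simp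
  then have image: "V' // (R' P)\<^sup>* = ?g ` (V // (E P)\<^sup>*)" and inj: "inj_on ?g (V // (E P)\<^sup>*)"
    unfolding bij_betw_def by auto
  have "?Q (?g c) = ?Q c" for c
    using legs_not_vw by auto
  then have "{c \<in> V' // (R' P)\<^sup>*. ?Q c} = ?g ` {c \<in> V // (E P)\<^sup>*. ?Q c}"
    unfolding image by auto
  moreover have "card (?g ` {c \<in> V // (E P)\<^sup>*. ?Q c}) = card {c \<in> V // (E P)\<^sup>*. ?Q c}"
    using inj by (intro card_image) (auto intro: inj_on_subset)
  ultimately show ?thesis
    unfolding closed_faces_def legs_contract by simp
qed

lemma closed_faces_white:
  assumes i: "i \<in> {1..D}"
  shows "closed_faces G' {0, i} = closed_faces G {0, i}"
proof -
  have "{0, i} \<subseteq> {0..D}" "i \<le> D"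
    using i by auto
  then show ?thesis
    using closed_faces_contract[OF _ joined_white _ i] E_white[of "{0, i}"]
    unfolding closed_faces_def by simp
qed

text \<open>The two faces of colors k, k' through v and through w merge into one.\<close>
lemma closed_faces_colored:
  assumes k: "k \<in> {1..D}" and k': "k' \<in> {1..D}"
  shows "closed_faces G {k, k'} = closed_faces G' {k, k'} + 1"
proof -
  let ?P = "{k, k'}"
  have P: "?P \<subseteq> {0..D}" and P0: "0 \<notin> ?P"
    using k k' by auto
  have apart: "(v, w) \<notin> (R ?P)\<^sup>*"
    using separate_bubbles rtrancl_mono[OF col_rel_mono[of ?P "{1..D}" G]] k k' by auto
  have "closed_faces G' ?P = card (V // (E ?P)\<^sup>*)"
    using closed_faces_contract[OF P joined_colored[OF k k'], of k] k P0 by simp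
  also have "\<dots> = card (V // (R ?P)\<^sup>*) - 1"
    unfolding E_def using card_quotient_add_edge[OF sym_col_rel[OF colored P] finite_V v_V w_V apart] .
  moreover have "card (V // (R ?P)\<^sup>*) > 0"
    using v_V finite_V by (auto simp: card_gt_0_iff quotient_as_image)
  ultimately show ?thesis
    using P0 by (simp add: closed_faces_def)
qed

text \<open>The open {0,i}-faces, hence the boundary graph, are unchanged.\<close>
lemma bsig_contract:
  assumes i: "i \<le> D" and x: "x \<in> legs G"
  shows "bsig G' i x = bsig G i x"
proof -
  have P: "{0, i} \<subseteq> {0..D}"
    using i by auto
  have "x \<in> V'"
    using x legs_not_vw unfolding legs_def by (auto simp: verts_contract)
  then have "(R' {0, i})\<^sup>*``{x} = (R {0, i})\<^sup>*``{x} - {v, w}"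
    using class_contract[OF P joined_white[OF i]] E_white[of "{0, i}"] by simp
  then have "(y \<in> legs G' \<and> y \<noteq> x \<and> (x, y) \<in> (R' {0, i})\<^sup>*) \<longleftrightarrow>
        (y \<in> legs G \<and> y \<noteq> x \<and> (x, y) \<in> (R {0, i})\<^sup>*)" for y
    using legs_contract legs_not_vw by blast
  then show ?thesis
    unfolding bsig_def by simp
qed

lemma bd_rel_contract:
  assumes "C \<subseteq> {0..D}"
  shows "bd_rel G' C = bd_rel G C"
proof -
  have same: "bsig G' i x = bsig G i x" if "x \<in> legs G" "i \<in> C" for x i
    using bsig_contract assms that by auto
  show ?thesis
  proof (intro set_eqI iffI)
    fix z
    assume "z \<in> bd_rel G' C"
    then obtain x i where "z = (x, bsig G' i x)" "x \<in> legs G" "i \<in> C"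
      unfolding bd_rel_def legs_contract by blast
    then show "z \<in> bd_rel G C"
      unfolding bd_rel_def using same by auto
  next
    fix z
    assume "z \<in> bd_rel G C"
    then obtain x i where "z = (x, bsig G i x)" "x \<in> legs G" "i \<in> C"
      unfolding bd_rel_def by blast
    then show "z \<in> bd_rel G' C"
      unfolding bd_rel_def legs_contract using same by force
  qed
qed

text \<open>Each jacket has exactly two pairs containing 0, whose faces survive, and D - 1 pairs of
  colors from 1..D, each of which loses one face.\<close>
lemma pinched_faces_contract:
  assumes J: "is_jacket D js" and D3: "D \<ge> 3"
  shows "pinched_faces G js = pinched_faces G' js + (D - 1)"
proof -
  have d: "distinct js" and set_js: "set js = {0..D}"
    using J unfolding is_jacket_def by auto
  have len: "length js = D + 1"
    using distinct_card[OF d] set_js by simp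
  have fin: "finite (jacket_pairs js)"
    by (simp add: jacket_pairs_image)
  have each: "closed_faces G P = closed_faces G' P + (if 0 \<in> P then 0 else 1)"
    if P: "P \<in> jacket_pairs js" for P
  proof -
    obtain a b where ab: "P = {a, b}" "a \<noteq> b" "a \<in> {0..D}" "b \<in> {0..D}"
      using jacket_pair_elem[OF d _ P] len set_js D3 by auto
    show ?thesis
    proof (cases "0 \<in> P")
      case True
      then obtain c where "P = {0, c}" "c \<in> {1..D}"
        using ab by (cases "a = 0") (auto simp: insert_commute)
      then show ?thesis
        using closed_faces_white by simp
    next
      case False
      then show ?thesis
        using closed_faces_colored[of a b] ab by simp
    qed
  qed
  have "(\<Sum>P\<in>jacket_pairs js. closed_faces G P) =
      (\<Sum>P\<in>jacket_pairs js. closed_faces G' P) + (\<Sum>P\<in>jacket_pairs js. if 0 \<in> P then 0 else 1)"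
    using each by (simp add: sum.distrib)
  also have "(\<Sum>P\<in>jacket_pairs js. if 0 \<in> P then 0 else 1) = card {P \<in> jacket_pairs js. 0 \<notin> P}"
    using fin by (simp add: sum.If_cases) (rule arg_cong[of _ _ card], blast)
  also have "\<dots> = D - 1"
    using card_jacket_pairs_avoiding[OF d] len set_js D3 by simp
  finally have faces_sum: "(\<Sum>P\<in>jacket_pairs js. closed_faces G P) =
      (\<Sum>P\<in>jacket_pairs js. closed_faces G' P) + (D - 1)" .
  have C: "{c. {0, c} \<in> jacket_pairs js} \<subseteq> {0..D}"
  proof
    fix c
    assume "c \<in> {c. {0, c} \<in> jacket_pairs js}"
    then obtain a b where "{0, c} = {a, b}" "a \<in> set js" "b \<in> set js"
      using jacket_pair_elem[OF d, of "{0, c}"] len D3 by auto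
    then show "c \<in> {0..D}"
      using set_js by (auto simp: doubleton_eq_iff)
  qed
  show ?thesis
    unfolding pinched_faces_def faces_sum bd_rel_contract[OF C] legs_contract by simp
qed

text \<open>Contracting the line removes 2 vertices, D + 1 internal lines and D - 1 faces of each
  pinched jacket, so the Euler characteristic is unchanged; the boundary graph is unchanged.\<close>
lemma pinched_genus_contract:
  assumes J: "is_jacket D js" and D3: "D \<ge> 3"
  shows "pinched_genus D G js = pinched_genus D G' js"
proof -
  have "real (pinched_faces G js) = real (pinched_faces G' js) + real D - 1"
    using pinched_faces_contract[OF J D3] D3 by simp
  then show ?thesis
    unfolding pinched_genus_def n_int_lines_def card_contract legs_contract
    by (simp add: field_simps)
qed

lemma boundary_genus_contract:
  assumes J: "is_bjacket D js" and D3: "D \<ge> 3"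
  shows "boundary_genus D G js = boundary_genus D G' js"
proof -
  have d: "distinct js" and set_js: "set js = {1..D}"
    using J unfolding is_bjacket_def by auto
  have len: "length js = D"
    using distinct_card[OF d] set_js by simp
  have "P \<subseteq> {0..D}" if "P \<in> jacket_pairs js" for P
    using jacket_pair_elem[OF d _ that] len set_js D3 by auto
  then have "(\<Sum>P\<in>jacket_pairs js. ncomp (legs G') (bd_rel G' P)) =
      (\<Sum>P\<in>jacket_pairs js. ncomp (legs G) (bd_rel G P))"
    using bd_rel_contract legs_contract by (intro sum.cong) auto
  moreover have "bd_rel G' {1..D} = bd_rel G {1..D}"
    using bd_rel_contract by auto
  ultimately show ?thesis
    unfolding boundary_genus_def legs_contract by simp
qed

lemma bubble_rel_contract: "(bubble_rel D G' T)\<^sup>* \<subseteq> (bubble_rel D G (insert (v, w) T))\<^sup>*"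
proof -
  have "(E {1..D})\<^sup>* \<subseteq> (bubble_rel D G (insert (v, w) T))\<^sup>*"
    unfolding E_def bubble_rel_def by (intro rtrancl_mono) blast
  then have "R' {1..D} \<subseteq> (bubble_rel D G (insert (v, w) T))\<^sup>*"
    using R_contract_in_E[of "{1..D}"] by auto
  then have "bubble_rel D G' T \<subseteq> (bubble_rel D G (insert (v, w) T))\<^sup>*"
    unfolding bubble_rel_def by auto
  then show ?thesis
    by (rule rtrancl_subset_rtrancl)
qed

end

text \<open>A forest of white lines: no line of it joins two vertices already connected through
  the bubbles and the other lines.  This is the invariant preserved by contraction.\<close>
definition white_forest :: "nat \<Rightarrow> 'v cgraph \<Rightarrow> ('v \<times> 'v) list \<Rightarrow> bool" where
  "white_forest D G ts \<longleftrightarrow> colored_graph D G \<and> (\<forall>t\<in>set ts. int_white G t) \<and>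
     distinct (map (\<lambda>(v, w). {v, w}) ts) \<and>
     (\<forall>t\<in>set ts. t \<notin> (bubble_rel D G (set ts - {t}))\<^sup>*)"

text \<open>A spanning tree is minimally connected, hence a forest.\<close>
lemma white_tree_forest:
  assumes colored: "colored_graph D G" and tree: "white_tree D G ts"
  shows "white_forest D G ts"
proof -
  have acyclic: "t \<notin> (bubble_rel D G (set ts - {t}))\<^sup>*" if t: "t \<in> set ts" for t
  proof
    let ?X = "bubble_rel D G (set ts - {t})"
    assume t_X: "t \<in> ?X\<^sup>*"
    have "sym ?X"
      using sym_col_rel[OF colored, of "{1..D}"] unfolding bubble_rel_def sym_def by auto
    then have swap_X: "(snd t, fst t) \<in> ?X\<^sup>*"
      using t_X sym_rtrancl by (metis prod.collapse symD)
    have "bubble_rel D G (set ts) \<subseteq> ?X\<^sup>*"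
    proof
      fix p
      assume p: "p \<in> bubble_rel D G (set ts)"
      show "p \<in> ?X\<^sup>*"
      proof (cases "p = t \<or> p = (snd t, fst t)")
        case True
        then show ?thesis
          using t_X swap_X by auto
      next
        case False
        then have "p \<in> ?X"
          using p unfolding bubble_rel_def by (cases t) auto
        then show ?thesis
          by blast
      qed
    qed
    then have "(bubble_rel D G (set ts))\<^sup>* \<subseteq> ?X\<^sup>*"
      by (rule rtrancl_subset_rtrancl)
    then have "tree_conn D G (set ts - {t})"
      using tree unfolding white_tree_def tree_conn_def bubble_rel_def by blast
    then show False
      using tree t unfolding white_tree_def by blast
  qed
  then show ?thesis
    using colored tree unfolding white_forest_def white_tree_def by blast
qed

lemma forest_head:
  assumes "white_forest D G (t # ts)"
  shows "line_contraction D G (fst t) (snd t)"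
proof
  have t_int: "int_white G t" and acyclic: "t \<notin> (bubble_rel D G (set (t # ts) - {t}))\<^sup>*"
    using assms unfolding white_forest_def by auto
  show "colored_graph D G"
    using assms unfolding white_forest_def by blast
  show "fst t \<in> verts G" "snd t = sig G 0 (fst t)" "fst t \<noteq> snd t"
    using t_int unfolding int_white_def by auto
  have "(col_rel G {1..D})\<^sup>* \<subseteq> (bubble_rel D G (set (t # ts) - {t}))\<^sup>*"
    unfolding bubble_rel_def by (intro rtrancl_mono) blast
  then show "(fst t, snd t) \<notin> (col_rel G {1..D})\<^sup>*"
    using acyclic by auto
qed

lemma forest_tail:
  assumes forest: "white_forest D G (t # ts)"
  shows "white_forest D (contract G t) ts"
proof -
  obtain v w where t: "t = (v, w)"
    by (cases t)
  interpret line_contraction D G v w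
    using forest_head[OF forest] t by simp
  have G': "contract G t = G'"
    unfolding G'_def t ..
  have dist: "distinct (map (\<lambda>(v, w). {v, w}) (t # ts))"
    using forest unfolding white_forest_def by blast
  have int_white': "int_white G' t'" if t': "t' \<in> set ts" for t'
  proof -
    obtain a b where ab: "t' = (a, b)"
      by (cases t')
    have a: "a \<in> V" "b = s 0 a" "b \<noteq> a"
      using forest t' ab unfolding white_forest_def int_white_def by auto
    have "{a, b} \<noteq> {v, w}"
      using dist t t' ab by (auto simp: rev_image_eqI)
    then have "a \<noteq> v" "a \<noteq> w"
      using a s0_v s0_w by auto
    then show ?thesis
      using a ab unfolding int_white_def by (simp add: verts_contract sig_contract_0)
  qed
  have acyclic': "t' \<notin> (bubble_rel D G' (set ts - {t'}))\<^sup>*" if t': "t' \<in> set ts" for t'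
  proof
    assume "t' \<in> (bubble_rel D G' (set ts - {t'}))\<^sup>*"
    then have "t' \<in> (bubble_rel D G (insert (v, w) (set ts - {t'})))\<^sup>*"
      using bubble_rel_contract by blast
    moreover have "insert (v, w) (set ts - {t'}) = set (t # ts) - {t'}"
      using dist t t' by auto
    ultimately have "t' \<in> (bubble_rel D G (set (t # ts) - {t'}))\<^sup>*"
      by simp
    then show False
      using forest t' unfolding white_forest_def by auto
  qed
  show ?thesis
    unfolding white_forest_def G'
    using colored_contract int_white' dist acyclic' by simp
qed

lemma genus_contract_forest:
  assumes "white_forest D G ts" and D3: "D \<ge> 3"
  shows "(is_jacket D js \<longrightarrow> pinched_genus D G js = pinched_genus D (foldl contract G ts) js) \<and>
    (is_bjacket D js \<longrightarrow> boundary_genus D G js = boundary_genus D (foldl contract G ts) js)"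
  using assms(1)
proof (induction ts arbitrary: G)
  case (Cons t ts)
  interpret line_contraction D G "fst t" "snd t"
    using forest_head[OF Cons.prems] .
  have "contract G t = G'"
    unfolding G'_def by simp
  then show ?case
    using Cons.IH[OF forest_tail[OF Cons.prems]] pinched_genus_contract[OF _ D3]
      boundary_genus_contract[OF _ D3] by simp
qed simp

theorem lemma1:
  fixes D :: nat and G :: "'v cgraph" and ts :: "('v \<times> 'v) list"
  assumes "D \<ge> 3"
    and "colored_graph D G"
    and "cg_connected D G"
    and "white_tree D G ts"
  shows "(\<forall>js. is_jacket D js \<longrightarrow>
            pinched_genus D G js = pinched_genus D (contract_tree G ts) js) \<and>
         (\<forall>js. is_bjacket D js \<longrightarrow>
            boundary_genus D G js = boundary_genus D (contract_tree G ts) js)"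
  using genus_contract_forest[OF white_tree_forest[OF assms(2,4)] assms(1)]
  unfolding contract_tree_def by blast

end
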